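(* For $m>0$ consider the soft second-price mechanism on $n$ users with bids $\mathbf b=(b_1,\dots,b_n)$: \[a_i(\mathbf b)=\frac{e^{mb_i}}{\sum_{j=1}^n e^{mb_j}},\qquad p_i(\mathbf b)=b_i-\frac{\sum_{j=1}^n e^{mb_j}}{m e^{mb_i}}\ln\frac{\sum_{j=1}^n e^{mb_j}}{1+\sum_{j\ne i}e^{mb_j}}.\] Suppose the bids are distinct and lie in $(0,1)$, and let $b_{(1)}>b_{(2)}>\cdots>b_{(n)}$ be the bids in decreasing order. Then \[\lim_{m\to+\infty}a_i(\mathbf b)=\begin{cases}1,&b_i=b_{(1)}\\0,&b_i\ne b_{(1)}\end{cases},\qquad \lim_{m\to+\infty}p_i(\mathbf b)=\min\{b_i,b_{(2)}\}.\] *)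

theory Defs
  imports Complex_Main
begin

text \<open>Users are indexed by 0, ..., n-1; bids are a function b :: nat => real.\<close>

definition soft_alloc :: "nat \<Rightarrow> real \<Rightarrow> (nat \<Rightarrow> real) \<Rightarrow> nat \<Rightarrow> real" where
  "soft_alloc n m b i = exp (m * b i) / (\<Sum>j<n. exp (m * b j))"

definition soft_pay :: "nat \<Rightarrow> real \<Rightarrow> (nat \<Rightarrow> real) \<Rightarrow> nat \<Rightarrow> real" where
  "soft_pay n m b i = b i - (\<Sum>j<n. exp (m * b j)) / (m * exp (m * b i)) *
     ln ((\<Sum>j<n. exp (m * b j)) / (1 + (\<Sum>j\<in>{..<n} - {i}. exp (m * b j))))"

definition top_bid :: "nat \<Rightarrow> (nat \<Rightarrow> real) \<Rightarrow> real" where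
  "top_bid n b = Max (b ` {..<n})"

definition second_bid :: "nat \<Rightarrow> (nat \<Rightarrow> real) \<Rightarrow> real" where
  "second_bid n b = Max (b ` {..<n} - {top_bid n b})"

end

theory Submission
  imports Defs
begin

text \<open>
  As \<open>m \<rightarrow> \<infinity>\<close>, a sum \<open>\<Sum>j. exp (m * c j)\<close> lies between its largest term and a constant
  multiple of it, so \<open>ln (\<Sum>j. exp (m * c j)) / m\<close> tends to \<open>max c\<close>. With
  \<open>S = \<Sum>j. exp (m * b j)\<close> and \<open>R = 1 + (\<Sum>j\<noteq>i. exp (m * b j))\<close> the payment is
  \<open>p i = b i - (ln S / m - ln R / m) / a i\<close>, \<open>a i\<close> the allocation. For the top bidder, \<open>a i \<rightarrow> 1\<close> because every
  other allocation is at most \<open>exp (m * (b j - b i)) \<rightarrow> 0\<close>, \<open>ln S / m \<rightarrow> b i\<close>, and, bids being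
  positive, the summand 1 of \<open>R\<close> is negligible, so \<open>ln R / m\<close> and hence \<open>p i\<close> tend to the
  second-highest bid. For any other bidder, \<open>ln x \<le> x - 1\<close> gives \<open>0 \<le> b i - p i \<le> 2 / m\<close>.
\<close>

lemma sum_exp_mult_bounds:
  fixes c :: "'a \<Rightarrow> real"
  assumes "finite A" "j0 \<in> A" "\<And>j. j \<in> A \<Longrightarrow> c j \<le> c j0" "0 \<le> m"
  shows "exp (m * c j0) \<le> (\<Sum>j\<in>A. exp (m * c j))"
    and "(\<Sum>j\<in>A. exp (m * c j)) \<le> card A * exp (m * c j0)"
proof -
  show "exp (m * c j0) \<le> (\<Sum>j\<in>A. exp (m * c j))"
    using assms(1,2) by (intro member_le_sum) simp_all
  show "(\<Sum>j\<in>A. exp (m * c j)) \<le> card A * exp (m * c j0)"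
    using sum_bounded_above[of A "\<lambda>j. exp (m * c j)" "exp (m * c j0)"] assms(3,4)
    by (simp add: mult_left_mono)
qed

lemma tendsto_ln_div_of_exp_bounds:
  fixes f :: "real \<Rightarrow> real"
  assumes "0 < C" and "\<forall>\<^sub>F m in at_top. exp (m * M) \<le> f m \<and> f m \<le> C * exp (m * M)"
  shows "((\<lambda>m. ln (f m) / m) \<longlongrightarrow> M) at_top"
proof (rule tendsto_sandwich)
  have bounds: "M \<le> ln (f m) / m \<and> ln (f m) / m \<le> M + ln C / m"
    if "0 < m" "exp (m * M) \<le> f m" "f m \<le> C * exp (m * M)" for m
  proof -
    have "m * M \<le> ln (f m)"
      using ln_mono[OF that(2)] by simp
    moreover have "ln (f m) \<le> ln (C * exp (m * M))"
      using that(3) less_le_trans[OF exp_gt_zero that(2)] by (rule ln_mono)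
    then have "ln (f m) \<le> ln C + m * M"
      using assms(1) by (simp add: ln_mult)
    ultimately show ?thesis
      using that(1) by (simp add: field_simps)
  qed
  show "\<forall>\<^sub>F m in at_top. M \<le> ln (f m) / m"
    using eventually_conj[OF eventually_gt_at_top[of 0] assms(2)]
    by eventually_elim (use bounds in blast)
  show "\<forall>\<^sub>F m in at_top. ln (f m) / m \<le> M + ln C / m"
    using eventually_conj[OF eventually_gt_at_top[of 0] assms(2)]
    by eventually_elim (use bounds in blast)
  show "((\<lambda>m. M) \<longlongrightarrow> M) at_top" by simp
  have "((\<lambda>m. M + ln C / m) \<longlongrightarrow> M + 0) at_top"
    by (intro tendsto_add tendsto_const tendsto_divide_0[OF tendsto_const]
        filterlim_at_top_imp_at_infinity filterlim_ident)
  then show "((\<lambda>m. M + ln C / m) \<longlongrightarrow> M) at_top" by simp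
qed

lemma tendsto_ln_sum_exp_div:
  fixes c :: "'a \<Rightarrow> real"
  assumes "finite A" "j0 \<in> A" "\<And>j. j \<in> A \<Longrightarrow> c j \<le> c j0"
  shows "((\<lambda>m. ln (\<Sum>j\<in>A. exp (m * c j)) / m) \<longlongrightarrow> c j0) at_top"
proof (rule tendsto_ln_div_of_exp_bounds)
  show "0 < real (card A)"
    using assms(1,2) card_gt_0_iff by auto
  show "\<forall>\<^sub>F m in at_top. exp (m * c j0) \<le> (\<Sum>j\<in>A. exp (m * c j)) \<and>
      (\<Sum>j\<in>A. exp (m * c j)) \<le> real (card A) * exp (m * c j0)"
    using eventually_ge_at_top[of 0]
    by eventually_elim (use sum_exp_mult_bounds[of A j0 c, OF assms] in auto)
qed

lemma tendsto_ln_one_plus_sum_exp_div: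
  fixes c :: "'a \<Rightarrow> real"
  assumes "finite A" "j0 \<in> A" "\<And>j. j \<in> A \<Longrightarrow> c j \<le> c j0" "0 \<le> c j0"
  shows "((\<lambda>m. ln (1 + (\<Sum>j\<in>A. exp (m * c j))) / m) \<longlongrightarrow> c j0) at_top"
proof (rule tendsto_ln_div_of_exp_bounds)
  show "0 < real (card A) + 1"
    by simp
  show "\<forall>\<^sub>F m in at_top. exp (m * c j0) \<le> 1 + (\<Sum>j\<in>A. exp (m * c j)) \<and>
      1 + (\<Sum>j\<in>A. exp (m * c j)) \<le> (real (card A) + 1) * exp (m * c j0)"
    using eventually_ge_at_top[of 0]
  proof eventually_elim
    case (elim m)
    have "1 \<le> exp (m * c j0)"
      using elim assms(4) by simp
    moreover have "exp (m * c j0) \<le> (\<Sum>j\<in>A. exp (m * c j))"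
      and "(\<Sum>j\<in>A. exp (m * c j)) \<le> real (card A) * exp (m * c j0)"
      using sum_exp_mult_bounds[of A j0 c m] assms(1-3) elim by simp_all
    moreover have
      "(real (card A) + 1) * exp (m * c j0) = real (card A) * exp (m * c j0) + exp (m * c j0)"
      by (simp add: distrib_right)
    ultimately show ?case
      by linarith
  qed
qed

lemma tendsto_exp_mult_neg:
  fixes c :: real
  assumes "c < 0"
  shows "((\<lambda>m. exp (m * c)) \<longlongrightarrow> 0) at_top"
proof -
  have "filterlim (\<lambda>m. c * m) at_bot at_top"
    using assms by (intro filterlim_tendsto_neg_mult_at_bot[OF tendsto_const] filterlim_ident)
  then have "filterlim (\<lambda>m. m * c) at_bot at_top"
    by (simp add: mult.commute)
  then show ?thesis
    using exp_at_bot filterlim_compose by blast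
qed

text \<open>With \<open>e = exp (m * b i)\<close> and \<open>R\<close> the denominator inside the logarithm of soft_pay,
  the bounded quantity is \<open>m * (b i - p i)\<close>.\<close>

lemma ln_ratio_bound:
  fixes e R :: real
  assumes "1 \<le> e" "e \<le> R"
  shows "0 \<le> (e + R - 1) / e * ln ((e + R - 1) / R)"
    and "(e + R - 1) / e * ln ((e + R - 1) / R) \<le> 2"
proof -
  have "1 \<le> (e + R - 1) / R"
    using assms by simp
  then show "0 \<le> (e + R - 1) / e * ln ((e + R - 1) / R)"
    using assms by simp
  have "ln ((e + R - 1) / R) \<le> (e - 1) / R"
    using ln_le_minus_one[of "(e + R - 1) / R"] assms by (simp add: field_simps)
  then have "(e + R - 1) / e * ln ((e + R - 1) / R) \<le> (e + R - 1) / e * ((e - 1) / R)"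
    using assms by (intro mult_left_mono) simp_all
  also have "\<dots> = (e + R - 1) / R * ((e - 1) / e)"
    by simp
  also have "\<dots> \<le> 2 * 1"
    using assms by (intro mult_mono) (simp_all add: field_simps)
  finally show "(e + R - 1) / e * ln ((e + R - 1) / R) \<le> 2"
    by simp
qed

lemma soft_alloc_nonneg: "0 \<le> soft_alloc n m b i"
  unfolding soft_alloc_def by (simp add: sum_nonneg)

lemma soft_alloc_le_exp:
  assumes "k < n"
  shows "soft_alloc n m b i \<le> exp (m * (b i - b k))"
proof -
  have "exp (m * b k) \<le> (\<Sum>j<n. exp (m * b j))"
    using assms by (intro member_le_sum) simp_all
  moreover have "0 < (\<Sum>j<n. exp (m * b j))"
    using assms by (intro sum_pos) auto
  ultimately have "soft_alloc n m b i \<le> exp (m * b i) / exp (m * b k)"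
    unfolding soft_alloc_def by (intro divide_left_mono) simp_all
  then show ?thesis
    by (simp add: right_diff_distrib exp_diff)
qed

lemma sum_soft_alloc:
  assumes "0 < n"
  shows "(\<Sum>j<n. soft_alloc n m b j) = 1"
proof -
  have "0 < (\<Sum>j<n. exp (m * b j))"
    using assms by (intro sum_pos) auto
  then show ?thesis
    unfolding soft_alloc_def sum_divide_distrib[symmetric] by simp
qed

lemma soft_alloc_tendsto_0:
  assumes "k < n" "b i < b k"
  shows "((\<lambda>m. soft_alloc n m b i) \<longlongrightarrow> 0) at_top"
proof (rule tendsto_sandwich)
  show "\<forall>\<^sub>F m in at_top. 0 \<le> soft_alloc n m b i"
    by (simp add: soft_alloc_nonneg)
  show "\<forall>\<^sub>F m in at_top. soft_alloc n m b i \<le> exp (m * (b i - b k))"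
    using assms(1) by (simp add: soft_alloc_le_exp)
  show "((\<lambda>m. 0) \<longlongrightarrow> (0::real)) at_top" by simp
  show "((\<lambda>m. exp (m * (b i - b k))) \<longlongrightarrow> 0) at_top"
    using assms(2) by (intro tendsto_exp_mult_neg) simp
qed

lemma soft_alloc_tendsto_1:
  assumes "i < n" "\<And>j. j < n \<Longrightarrow> j \<noteq> i \<Longrightarrow> b j < b i"
  shows "((\<lambda>m. soft_alloc n m b i) \<longlongrightarrow> 1) at_top"
proof -
  have "soft_alloc n m b i = 1 - (\<Sum>j\<in>{..<n} - {i}. soft_alloc n m b j)" for m
    using sum.remove[of "{..<n}" i "soft_alloc n m b"] sum_soft_alloc[of n m b] assms(1) by simp
  moreover have "((\<lambda>m. \<Sum>j\<in>{..<n} - {i}. soft_alloc n m b j) \<longlongrightarrow> 0) at_top"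
    using assms by (intro tendsto_null_sum soft_alloc_tendsto_0) auto
  ultimately show ?thesis
    using tendsto_diff[OF tendsto_const, of _ 0 at_top 1] by simp
qed

lemma soft_pay_eq:
  fixes b :: "nat \<Rightarrow> real"
  assumes "i < n"
  defines "S m \<equiv> \<Sum>j<n. exp (m * b j)"
    and "R m \<equiv> 1 + (\<Sum>j\<in>{..<n} - {i}. exp (m * b j))"
  shows "soft_pay n m b i = b i - (ln (S m) / m - ln (R m) / m) / soft_alloc n m b i"
proof -
  have "0 < S m"
    unfolding S_def using assms(1) by (intro sum_pos) auto
  moreover have "0 < R m"
    unfolding R_def by (intro add_pos_nonneg sum_nonneg) auto
  ultimately show ?thesis
    unfolding soft_pay_def soft_alloc_def S_def[symmetric] R_def[symmetric]
    by (simp add: ln_div diff_divide_distrib[symmetric])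
qed

lemma soft_pay_bounds:
  assumes "0 < m" "i < n" "k < n" "k \<noteq> i" "0 \<le> b i" "b i \<le> b k"
  shows "b i - 2 / m \<le> soft_pay n m b i" and "soft_pay n m b i \<le> b i"
proof -
  define e where "e = exp (m * b i)"
  define R where "R = 1 + (\<Sum>j\<in>{..<n} - {i}. exp (m * b j))"
  have "1 \<le> e"
    unfolding e_def using assms(1,5) by simp
  have "e \<le> exp (m * b k)"
    unfolding e_def using assms(1,6) by simp
  also have "\<dots> \<le> (\<Sum>j\<in>{..<n} - {i}. exp (m * b j))"
    using assms(3,4) by (intro member_le_sum) simp_all
  finally have "e \<le> R"
    unfolding R_def by simp
  have "(\<Sum>j<n. exp (m * b j)) = e + R - 1"
    unfolding e_def R_def using sum.remove[of "{..<n}" i "\<lambda>j. exp (m * b j)"] assms(2) by simp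
  then have gap: "b i - soft_pay n m b i = (e + R - 1) / e * ln ((e + R - 1) / R) / m"
    unfolding soft_pay_def e_def[symmetric] R_def[symmetric] by simp
  have "(e + R - 1) / e * ln ((e + R - 1) / R) / m \<le> 2 / m"
    using ln_ratio_bound(2)[OF \<open>1 \<le> e\<close> \<open>e \<le> R\<close>] assms(1) by (intro divide_right_mono) simp_all
  then show "b i - 2 / m \<le> soft_pay n m b i"
    using gap by linarith
  have "0 \<le> (e + R - 1) / e * ln ((e + R - 1) / R) / m"
    using ln_ratio_bound(1)[OF \<open>1 \<le> e\<close> \<open>e \<le> R\<close>] assms(1) by (intro divide_nonneg_pos) simp_all
  then show "soft_pay n m b i \<le> b i"
    using gap by linarith
qed

lemma soft_pay_tendsto_bid:
  assumes "i < n" "k < n" "k \<noteq> i" "0 \<le> b i" "b i \<le> b k"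
  shows "((\<lambda>m. soft_pay n m b i) \<longlongrightarrow> b i) at_top"
proof (rule tendsto_sandwich)
  show "\<forall>\<^sub>F m in at_top. b i - 2 / m \<le> soft_pay n m b i"
    using eventually_gt_at_top[of 0] by eventually_elim (rule soft_pay_bounds(1)[OF _ assms])
  show "\<forall>\<^sub>F m in at_top. soft_pay n m b i \<le> b i"
    using eventually_gt_at_top[of 0] by eventually_elim (rule soft_pay_bounds(2)[OF _ assms])
  have "((\<lambda>m. b i - 2 / m) \<longlongrightarrow> b i - 0) at_top"
    by (intro tendsto_diff tendsto_const tendsto_divide_0[OF tendsto_const]
        filterlim_at_top_imp_at_infinity filterlim_ident)
  then show "((\<lambda>m. b i - 2 / m) \<longlongrightarrow> b i) at_top" by simp
  show "((\<lambda>m. b i) \<longlongrightarrow> b i) at_top" by simp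
qed

lemma soft_pay_tendsto_second:
  assumes "i < n" "k < n" "k \<noteq> i" "0 \<le> b k"
    and "\<And>j. j < n \<Longrightarrow> j \<noteq> i \<Longrightarrow> b j < b i"
    and "\<And>j. j < n \<Longrightarrow> j \<noteq> i \<Longrightarrow> b j \<le> b k"
  shows "((\<lambda>m. soft_pay n m b i) \<longlongrightarrow> b k) at_top"
proof -
  have "((\<lambda>m. ln (\<Sum>j<n. exp (m * b j)) / m) \<longlongrightarrow> b i) at_top"
    using assms(1,5) by (intro tendsto_ln_sum_exp_div) (auto simp: order_le_less)
  moreover have "((\<lambda>m. ln (1 + (\<Sum>j\<in>{..<n} - {i}. exp (m * b j))) / m) \<longlongrightarrow> b k) at_top"
    using assms(2-4,6) by (intro tendsto_ln_one_plus_sum_exp_div) auto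
  moreover have "((\<lambda>m. soft_alloc n m b i) \<longlongrightarrow> 1) at_top"
    using assms(1,5) by (rule soft_alloc_tendsto_1)
  ultimately have "((\<lambda>m. b i - (ln (\<Sum>j<n. exp (m * b j)) / m
      - ln (1 + (\<Sum>j\<in>{..<n} - {i}. exp (m * b j))) / m) / soft_alloc n m b i)
      \<longlongrightarrow> b i - (b i - b k) / 1) at_top"
    by (intro tendsto_diff tendsto_const tendsto_divide) simp_all
  then show ?thesis
    unfolding soft_pay_eq[OF assms(1), symmetric] by simp
qed

lemma top_bid_ge: "j < n \<Longrightarrow> b j \<le> top_bid n b"
  unfolding top_bid_def by (intro Max_ge) auto

lemma top_bid_attained:
  assumes "0 < n"
  obtains k where "k < n" "b k = top_bid n b"
proof -
  have "top_bid n b \<in> b ` {..<n}"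
    unfolding top_bid_def using assms by (intro Max_in) auto
  then show ?thesis
    using that by auto
qed

lemma second_bid_ge: "j < n \<Longrightarrow> b j \<noteq> top_bid n b \<Longrightarrow> b j \<le> second_bid n b"
  unfolding second_bid_def by (intro Max_ge) auto

lemma second_bid_attained:
  assumes "2 \<le> n" "inj_on b {..<n}"
  obtains k where "k < n" "b k = second_bid n b" "b k \<noteq> top_bid n b"
proof -
  obtain k where k: "k < n" "b k = top_bid n b"
    using top_bid_attained[of n b] assms(1) by auto
  define j where "j = (if k = 0 then 1 else 0 :: nat)"
  have j: "j < n" "j \<noteq> k"
    using assms(1) unfolding j_def by auto
  have "b j \<noteq> top_bid n b"
    using inj_onD[OF assms(2), of j k] j k by auto
  then have "b j \<in> b ` {..<n} - {top_bid n b}"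
    using j(1) by simp
  then have "second_bid n b \<in> b ` {..<n} - {top_bid n b}"
    unfolding second_bid_def by (intro Max_in) auto
  then show ?thesis
    using that by auto
qed

lemma top_bid_gt_others:
  assumes "inj_on b {..<n}" "i < n" "b i = top_bid n b" "j < n" "j \<noteq> i"
  shows "b j < b i"
proof -
  have "b j \<noteq> b i"
    using inj_onD[OF assms(1), of j i] assms(2,4,5) by auto
  then show ?thesis
    using top_bid_ge[of j n b] assms(3,4) by simp
qed

theorem mainTheorem6:
  fixes n :: nat and b :: "nat \<Rightarrow> real"
  assumes "n \<ge> 2"
    and "inj_on b {..<n}"
    and "\<And>j. j < n \<Longrightarrow> 0 < b j \<and> b j < 1"
    and "i < n"
  shows "((\<lambda>m. soft_alloc n m b i) \<longlongrightarrow> (if b i = top_bid n b then 1 else 0)) at_top \<and>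
         ((\<lambda>m. soft_pay n m b i) \<longlongrightarrow> min (b i) (second_bid n b)) at_top"
proof (cases "b i = top_bid n b")
  case True
  note others_below = top_bid_gt_others[OF assms(2,4) True]
  obtain k where k: "k < n" "b k = second_bid n b" "b k \<noteq> top_bid n b"
    using second_bid_attained[OF assms(1,2)] .
  have "k \<noteq> i"
    using k(3) True by auto
  have "((\<lambda>m. soft_pay n m b i) \<longlongrightarrow> b k) at_top"
  proof (rule soft_pay_tendsto_second)
    show "b j \<le> b k" if "j < n" "j \<noteq> i" for j
      using second_bid_ge[OF that(1)] others_below[OF that] True k(2) by simp
  qed (use k(1) \<open>k \<noteq> i\<close> assms(3)[OF k(1)] assms(4) others_below in auto)
  moreover have "min (b i) (second_bid n b) = b k"
    using others_below[OF k(1) \<open>k \<noteq> i\<close>] k(2) by simp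
  ultimately show ?thesis
    using soft_alloc_tendsto_1[of i n b, OF assms(4) others_below] True by simp
next
  case False
  obtain k where k: "k < n" "b k = top_bid n b"
    using top_bid_attained[of n b] assms(1) by auto
  have "b i < b k" "k \<noteq> i"
    using top_bid_ge[of i n b] assms(4) False k by auto
  moreover have "min (b i) (second_bid n b) = b i"
    using second_bid_ge[OF assms(4) False] by simp
  moreover have "0 \<le> b i"
    using assms(3,4) by (simp add: less_imp_le)
  ultimately show ?thesis
    using soft_alloc_tendsto_0[OF k(1), of b i] soft_pay_tendsto_bid[OF assms(4) k(1), of b] False
    by simp
qed

end
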